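(* For every language $L=\mathrm{LLin}_\ell(\pi,\sigma,\alpha,\theta)$ there exist $\alpha'\colon\Sigma^\ell\to\mathbb R_{\ge0}$ and $\theta'$ such that $L=\mathrm{LLin}_\ell(\pi,\sigma,\alpha',\theta')$ and: (1) $\theta'=1$; (2) there is a constant $\varepsilon>0$ such that for every $w\in\Sigma^*$, either $f'(w)<1-\varepsilon$ or $f'(w)>1+\varepsilon$, where $f'(w)=\sum_{m\in\Sigma^\ell}\alpha'(m)\,|w|_m$; (3) there is $k\in\mathbb N_0$ such that for every $m\in\Sigma^\ell$ there is $n\in\{0,1,\dots,2^k-1\}$ with $\alpha'(m)=k-\log_2(n+1)$.
   Context: $\Sigma$ is a finite alphabet. For a word $w$ and $\ell\in\mathbb N_0$, $p_\ell(w)$ (resp. $s_\ell(w)$) is the prefix (resp. suffix) of $w$ of length $\ell$ if $|w|\ge\ell$ and $w$ otherwise; $|w|_m$ is the number of occurrences of $m$ as an infix of $w$. For $\ell\in\mathbb N_0$, $\theta\in\mathbb R_{\ge0}$, $\pi,\sigma\subseteq\Sigma^{\le\ell-1}$ and $\alpha\colon\Sigma^\ell\to\mathbb R_{\ge0}$, $\mathrm{LLin}_\ell(\pi,\sigma,\alpha,\theta)$ is the set of $w\in\Sigma^+$ with $p_{\ell-1}(w)\in\pi$, $s_{\ell-1}(w)\in\sigma$ and $\sum_{m\in\Sigma^\ell}\alpha(m)|w|_m\le\theta$. *)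

theory Defs
  imports Complex_Main
begin

definition pre :: "nat \<Rightarrow> 'a list \<Rightarrow> 'a list" where
  "pre l w = take l w"

definition suf :: "nat \<Rightarrow> 'a list \<Rightarrow> 'a list" where
  "suf l w = drop (length w - l) w"

definition occ :: "'a list \<Rightarrow> 'a list \<Rightarrow> nat" where
  "occ m w = card {i. i + length m \<le> length w \<and> take (length m) (drop i w) = m}"

definition words_of_len :: "nat \<Rightarrow> 'a list set" where
  "words_of_len l = {m. length m = l}"

definition wsum :: "nat \<Rightarrow> ('a list \<Rightarrow> real) \<Rightarrow> 'a list \<Rightarrow> real" where
  "wsum l \<alpha> w = (\<Sum>m\<in>words_of_len l. \<alpha> m * real (occ m w))"

definition LLin :: "nat \<Rightarrow> 'a list set \<Rightarrow> 'a list set \<Rightarrow> ('a list \<Rightarrow> real) \<Rightarrow> real \<Rightarrow> 'a list set" where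
  "LLin l \<pi> \<sigma> \<alpha> \<theta> = {w. w \<noteq> [] \<and> pre (l - 1) w \<in> \<pi> \<and> suf (l - 1) w \<in> \<sigma> \<and> wsum l \<alpha> w \<le> \<theta>}"

end

theory Submission
  imports Defs "HOL-Library.FuncSet"
begin

text \<open>A nonnegative combination of counts takes only finitely many values below any bound, so
  there is a gap between the threshold and the next value above it. Rescaling moves the threshold
  to 1 with a relative gap \<open>\<gamma>\<close> on both sides. Each weight \<open>x\<close> is then rounded down to
  \<open>k - log\<^sub>2 \<lceil>2\<^sup>k\<^sup>-\<^sup>x\<rceil>\<close>, a value of the required form; for large \<open>k\<close> this loses at most a fraction
  \<open>\<eta>\<close> of every positive weight, which is too little to close the gap.\<close>

lemma finite_weighted_count_sums_le:
  fixes W :: "'b set" and \<alpha> :: "'b \<Rightarrow> real" and t :: real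
  assumes "finite W" and nonneg: "\<forall>m\<in>W. \<alpha> m \<ge> 0"
  shows "finite {v. \<exists>c::'b \<Rightarrow> nat. v = (\<Sum>m\<in>W. \<alpha> m * real (c m)) \<and> v \<le> t}"
proof -
  define g where "g c = (\<Sum>m\<in>W. \<alpha> m * real (c m))" for c :: "'b \<Rightarrow> nat"
  define a where "a = Min (insert 1 (\<alpha> ` {m\<in>W. \<alpha> m > 0}))"
  have a_pos: "a > 0" and a_le: "\<And>m. m \<in> W \<Longrightarrow> \<alpha> m > 0 \<Longrightarrow> a \<le> \<alpha> m"
    using \<open>finite W\<close> by (auto simp: a_def)
  define K where "K = nat \<lceil>t / a\<rceil>"
  have "g c \<in> g ` PiE W (\<lambda>_. {0..K})" if "g c \<le> t" for c
  proof -
    \<comment> \<open>counts at zero weights do not matter, and the others are at most \<open>t / a\<close>\<close>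
    define d where "d = restrict (\<lambda>m. if \<alpha> m > 0 then c m else 0) W"
    have "g c = g d" unfolding g_def d_def using nonneg by (intro sum.cong) auto
    moreover have "d m \<le> K" if m: "m \<in> W" and pos: "\<alpha> m > 0" for m
    proof -
      have "a * real (c m) \<le> \<alpha> m * real (c m)"
        using a_le[OF m pos] by (simp add: mult_right_mono)
      also have "\<dots> \<le> g c" unfolding g_def
        using m \<open>finite W\<close> nonneg by (intro member_le_sum) auto
      finally have "real (c m) \<le> t / a" using \<open>g c \<le> t\<close> a_pos by (simp add: field_simps)
      then show ?thesis using m pos by (simp add: d_def K_def) linarith
    qed
    then have "d \<in> PiE W (\<lambda>_. {0..K})" by (auto simp: d_def)
    ultimately show ?thesis by blast
  qed
  then have "{v. \<exists>c. v = g c \<and> v \<le> t} \<subseteq> g ` PiE W (\<lambda>_. {0..K})" by blast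
  moreover have "finite (g ` PiE W (\<lambda>_. {0..K}))" using \<open>finite W\<close> by (simp add: finite_PiE)
  ultimately show ?thesis unfolding g_def by (rule finite_subset)
qed

lemma weighted_count_sum_gap:
  fixes W :: "'b set" and \<alpha> :: "'b \<Rightarrow> real" and \<theta> :: real
  assumes "finite W" and "\<forall>m\<in>W. \<alpha> m \<ge> 0"
  shows "\<exists>\<delta>>0. \<forall>c::'b \<Rightarrow> nat.
           (\<Sum>m\<in>W. \<alpha> m * real (c m)) \<le> \<theta> \<or> \<theta> + \<delta> \<le> (\<Sum>m\<in>W. \<alpha> m * real (c m))"
proof -
  define g where "g c = (\<Sum>m\<in>W. \<alpha> m * real (c m))" for c :: "'b \<Rightarrow> nat"
  define V where "V = {v. \<exists>c. v = g c \<and> v \<le> \<theta> + 1} \<inter> {v. \<theta> < v}"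
  have "finite V"
    using finite_weighted_count_sums_le[OF assms, of "\<theta> + 1"] by (simp add: V_def g_def)
  define \<delta> where "\<delta> = Min (insert (\<theta> + 1) V) - \<theta>"
  have "\<delta> > 0" using \<open>finite V\<close> by (auto simp: \<delta>_def V_def)
  moreover have "g c \<le> \<theta> \<or> \<theta> + \<delta> \<le> g c" for c
  proof (cases "g c \<le> \<theta> + 1")
    case True
    then have "\<not> g c \<le> \<theta> \<Longrightarrow> g c \<in> V" by (auto simp: V_def)
    moreover have "g c \<in> V \<Longrightarrow> Min (insert (\<theta> + 1) V) \<le> g c"
      using \<open>finite V\<close> by (intro Min_le) auto
    ultimately show ?thesis by (auto simp: \<delta>_def)
  next
    case False
    moreover have "Min (insert (\<theta> + 1) V) \<le> \<theta> + 1"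
      using \<open>finite V\<close> by (intro Min_le) auto
    ultimately show ?thesis by (auto simp: \<delta>_def)
  qed
  ultimately show ?thesis unfolding g_def by blast
qed

text \<open>The largest number of the form \<open>k - log\<^sub>2 j\<close>, \<open>j\<close> a positive integer, not exceeding \<open>x\<close>.\<close>
definition log_grid_round :: "nat \<Rightarrow> real \<Rightarrow> real" where
  "log_grid_round k x = real k - log 2 (real_of_int \<lceil>2 powr (real k - x)\<rceil>)"

lemma log_grid_round_le: "log_grid_round k x \<le> x"
proof -
  have "real k - x = log 2 (2 powr (real k - x))" by simp
  also have "\<dots> \<le> log 2 (real_of_int \<lceil>2 powr (real k - x)\<rceil>)"
    by (intro log_mono) (auto simp: le_of_int_ceiling)
  finally show ?thesis by (simp add: log_grid_round_def)
qed

lemma ceiling_powr_le_power: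
  assumes "0 \<le> x"
  shows "\<lceil>2 powr (real k - x)\<rceil> \<le> 2 ^ k"
proof -
  have "2 powr (real k - x) \<le> 2 powr (real k)" using assms by (intro powr_mono) auto
  then show ?thesis by (simp add: ceiling_le_iff powr_realpow)
qed

lemma log_grid_round_nonneg:
  assumes "0 \<le> x"
  shows "0 \<le> log_grid_round k x"
proof -
  have "log 2 (real_of_int \<lceil>2 powr (real k - x)\<rceil>) \<le> log 2 (2 ^ k)"
    using ceiling_powr_le_power[OF assms, of k]
    by (intro log_mono) (auto simp: le_ceiling_iff simp flip: of_int_le_iff)
  then show ?thesis by (simp add: log_grid_round_def log_nat_power)
qed

lemma log_grid_round_on_grid:
  assumes "0 \<le> x"
  shows "\<exists>n::nat. n < 2 ^ k \<and> log_grid_round k x = real k - log 2 (real n + 1)"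
proof -
  have "\<lceil>2 powr (real k - x)\<rceil> \<le> 2 ^ k" using ceiling_powr_le_power[OF assms] .
  moreover have "1 \<le> \<lceil>2 powr (real k - x)\<rceil>" by (simp add: le_ceiling_iff)
  moreover obtain j :: nat where j: "\<lceil>2 powr (real k - x)\<rceil> = int j"
    using \<open>1 \<le> \<lceil>2 powr (real k - x)\<rceil>\<close> by (metis nonneg_int_cases zero_le_one order_trans)
  ultimately have "1 \<le> j" "j \<le> 2 ^ k" by simp_all
  then have "j - 1 < 2 ^ k" and "real (j - 1) + 1 = real_of_int \<lceil>2 powr (real k - x)\<rceil>"
    using j by (auto simp: of_nat_diff)
  then show ?thesis unfolding log_grid_round_def by metis
qed

lemma log_grid_round_ge:
  assumes "1 \<le> 2 powr (real k - x) * (2 powr (\<eta> * x) - 1)"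
  shows "(1 - \<eta>) * x \<le> log_grid_round k x"
proof -
  have "real_of_int \<lceil>2 powr (real k - x)\<rceil> \<le> 2 powr (real k - x) + 1" by linarith
  also have "\<dots> \<le> 2 powr (real k - x) * 2 powr (\<eta> * x)"
    using assms by (simp add: algebra_simps)
  also have "\<dots> = 2 powr (real k - (1 - \<eta>) * x)" by (simp add: powr_add [symmetric] algebra_simps)
  finally have "log 2 (real_of_int \<lceil>2 powr (real k - x)\<rceil>) \<le> log 2 (2 powr (real k - (1 - \<eta>) * x))"
    by (intro log_mono) auto
  then show ?thesis by (simp add: log_grid_round_def)
qed

lemma log_grid_round_relative_error:
  fixes W :: "'b set" and \<beta> :: "'b \<Rightarrow> real"
  assumes "finite W" and nonneg: "\<forall>m\<in>W. 0 \<le> \<beta> m" and "0 < \<eta>"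
  shows "\<exists>k. \<forall>m\<in>W. (1 - \<eta>) * \<beta> m \<le> log_grid_round k (\<beta> m)"
proof -
  define B where "B = Max (insert 0 (\<beta> ` W))"
  define b where "b = Min (insert 1 (\<beta> ` {m\<in>W. \<beta> m > 0}))"
  have B: "\<And>m. m \<in> W \<Longrightarrow> \<beta> m \<le> B" and "b > 0"
    and b: "\<And>m. m \<in> W \<Longrightarrow> \<beta> m > 0 \<Longrightarrow> b \<le> \<beta> m"
    using \<open>finite W\<close> by (auto simp: B_def b_def)
  define c where "c = 2 powr (\<eta> * b) - 1"
  have "c > 0" using \<open>0 < \<eta>\<close> \<open>b > 0\<close> by (simp add: c_def)
  obtain k0 :: nat where k0: "1 / c < 2 ^ k0" using real_arch_pow[of 2 "1 / c"] by auto
  define k where "k = k0 + nat \<lceil>B\<rceil>"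
  have "(1 - \<eta>) * \<beta> m \<le> log_grid_round k (\<beta> m)" if m: "m \<in> W" for m
  proof (cases "\<beta> m > 0")
    case True
    have "2 ^ k0 = 2 powr real k0" by (simp add: powr_realpow)
    also have "\<dots> \<le> 2 powr (real k - \<beta> m)"
      using B[OF m] real_nat_ceiling_ge[of B] by (intro powr_mono) (auto simp: k_def)
    finally have "2 ^ k0 \<le> 2 powr (real k - \<beta> m)" .
    moreover have "c \<le> 2 powr (\<eta> * \<beta> m) - 1"
      using b[OF m True] \<open>0 < \<eta>\<close> by (simp add: c_def)
    moreover have "1 < 2 ^ k0 * c" using k0 \<open>c > 0\<close> by (simp add: field_simps)
    ultimately have "1 \<le> 2 powr (real k - \<beta> m) * (2 powr (\<eta> * \<beta> m) - 1)"
      using \<open>c > 0\<close> by (smt (verit) mult_mono zero_le_power)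
    then show ?thesis by (rule log_grid_round_ge)
  next
    case False
    then show ?thesis using nonneg m log_grid_round_nonneg[of "\<beta> m" k] by auto
  qed
  then show ?thesis by blast
qed

lemma threshold_gap_normalize:
  fixes f :: "'w \<Rightarrow> real" and \<theta> \<delta> :: real
  assumes "0 \<le> \<theta>" and "0 < \<delta>" and gap: "\<forall>w. f w \<le> \<theta> \<or> \<theta> + \<delta> \<le> f w"
  shows "\<exists>s>0. \<exists>\<gamma>>0. \<forall>w. (f w \<le> \<theta> \<longrightarrow> s * f w \<le> 1 - \<gamma>) \<and> (\<theta> < f w \<longrightarrow> 1 + \<gamma> \<le> s * f w)"
proof -
  define s where "s = 1 / (\<theta> + \<delta> / 2)"
  define \<gamma> where "\<gamma> = (\<delta> / 2) / (\<theta> + \<delta> / 2)"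
  have "\<theta> + \<delta> / 2 > 0" using assms by simp
  then have "s > 0" "\<gamma> > 0" and s\<theta>: "s * \<theta> = 1 - \<gamma>" and s\<delta>: "s * (\<theta> + \<delta>) = 1 + \<gamma>"
    using \<open>0 < \<delta>\<close> by (auto simp: s_def \<gamma>_def field_simps)
  have "(f w \<le> \<theta> \<longrightarrow> s * f w \<le> 1 - \<gamma>) \<and> (\<theta> < f w \<longrightarrow> 1 + \<gamma> \<le> s * f w)" for w
    using gap[rule_format, of w] \<open>s > 0\<close> s\<theta> s\<delta>
    by (metis mult_left_mono less_imp_le not_le)
  with \<open>s > 0\<close> \<open>\<gamma> > 0\<close> show ?thesis by blast
qed

lemma relative_error_above_gap:
  fixes x y \<gamma> :: real
  assumes "0 < \<gamma>" and "(1 - \<gamma> / (2 * (1 + \<gamma>))) * x \<le> y" and "1 + \<gamma> \<le> x"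
  shows "1 + \<gamma> / 2 \<le> y"
proof -
  have "(1 - \<gamma> / (2 * (1 + \<gamma>))) * (1 + \<gamma>) = 1 + \<gamma> / 2" and "0 \<le> 1 - \<gamma> / (2 * (1 + \<gamma>))"
    using \<open>0 < \<gamma>\<close> by (auto simp: field_simps)
  then show ?thesis using assms by (smt (verit) mult_left_mono)
qed

lemma finite_words_of_len: "finite (words_of_len l :: 'a::finite list set)"
  using finite_lists_length_eq[of "UNIV :: 'a set" l] by (simp add: words_of_len_def)

lemma wsum_scale: "wsum l (\<lambda>m. s * \<alpha> m) w = s * wsum l \<alpha> w"
  by (simp add: wsum_def sum_distrib_left mult.assoc)

lemma wsum_mono:
  assumes "\<forall>m\<in>words_of_len l. \<alpha> m \<le> \<beta> m"
  shows "wsum l \<alpha> w \<le> wsum l \<beta> w"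
  unfolding wsum_def using assms by (intro sum_mono mult_right_mono) auto

lemma wsum_gap:
  fixes \<alpha> :: "'a::finite list \<Rightarrow> real"
  assumes "\<forall>m\<in>words_of_len l. \<alpha> m \<ge> 0"
  shows "\<exists>\<delta>>0. \<forall>w. wsum l \<alpha> w \<le> \<theta> \<or> \<theta> + \<delta> \<le> wsum l \<alpha> w"
proof -
  obtain \<delta> where "\<delta> > 0" and gap: "\<forall>c::'a list \<Rightarrow> nat.
      (\<Sum>m\<in>words_of_len l. \<alpha> m * real (c m)) \<le> \<theta> \<or> \<theta> + \<delta> \<le> (\<Sum>m\<in>words_of_len l. \<alpha> m * real (c m))"
    using weighted_count_sum_gap[OF finite_words_of_len assms] by blast
  have "wsum l \<alpha> w \<le> \<theta> \<or> \<theta> + \<delta> \<le> wsum l \<alpha> w" for w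
    using gap[rule_format, of "\<lambda>m. occ m w"] by (simp add: wsum_def)
  with \<open>\<delta> > 0\<close> show ?thesis by blast
qed

theorem mainTheorem10:
  fixes l :: nat and \<pi> \<sigma> :: "('a::finite) list set"
    and \<alpha> :: "'a list \<Rightarrow> real" and \<theta> :: real
  assumes "\<pi> \<subseteq> {u. length u < l}" and "\<sigma> \<subseteq> {u. length u < l}"
    and "\<forall>m\<in>words_of_len l. \<alpha> m \<ge> 0" and "\<theta> \<ge> 0"
  shows "\<exists>\<alpha>' \<theta>'. (\<forall>m\<in>words_of_len l. \<alpha>' m \<ge> 0)
           \<and> LLin l \<pi> \<sigma> \<alpha> \<theta> = LLin l \<pi> \<sigma> \<alpha>' \<theta>'
           \<and> \<theta>' = 1
           \<and> (\<exists>\<epsilon>>0. \<forall>w::'a list. wsum l \<alpha>' w < 1 - \<epsilon> \<or> wsum l \<alpha>' w > 1 + \<epsilon>)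
           \<and> (\<exists>k::nat. \<forall>m\<in>words_of_len l. \<exists>n::nat. n < 2 ^ k \<and> \<alpha>' m = real k - log 2 (real n + 1))"
proof -
  obtain \<delta> where "\<delta> > 0" and "\<forall>w. wsum l \<alpha> w \<le> \<theta> \<or> \<theta> + \<delta> \<le> wsum l \<alpha> w"
    using wsum_gap[OF assms(3)] by blast
  then obtain s \<gamma> where "s > 0" "\<gamma> > 0" and normalized:
    "\<And>w. (wsum l \<alpha> w \<le> \<theta> \<longrightarrow> s * wsum l \<alpha> w \<le> 1 - \<gamma>) \<and> (\<theta> < wsum l \<alpha> w \<longrightarrow> 1 + \<gamma> \<le> s * wsum l \<alpha> w)"
    using threshold_gap_normalize[OF assms(4)] by blast
  define \<beta> where "\<beta> = (\<lambda>m. s * \<alpha> m)"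
  define \<eta> where "\<eta> = \<gamma> / (2 * (1 + \<gamma>))"
  have \<beta>_nonneg: "\<forall>m\<in>words_of_len l. 0 \<le> \<beta> m" using assms(3) \<open>s > 0\<close> by (simp add: \<beta>_def)
  have "\<eta> > 0" using \<open>\<gamma> > 0\<close> by (simp add: \<eta>_def)
  then obtain k where rounded: "\<forall>m\<in>words_of_len l. (1 - \<eta>) * \<beta> m \<le> log_grid_round k (\<beta> m)"
    using log_grid_round_relative_error[OF finite_words_of_len \<beta>_nonneg] by blast
  define \<alpha>' where "\<alpha>' m = log_grid_round k (\<beta> m)" for m
  have lower: "(1 - \<eta>) * (s * wsum l \<alpha> w) \<le> wsum l \<alpha>' w"
    and upper: "wsum l \<alpha>' w \<le> s * wsum l \<alpha> w" for w
    using wsum_mono[of l "\<lambda>m. (1 - \<eta>) * \<beta> m" \<alpha>'] wsum_mono[of l \<alpha>' \<beta>] rounded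
    by (auto simp: \<alpha>'_def \<beta>_def wsum_scale log_grid_round_le)
  have separated: "(wsum l \<alpha> w \<le> \<theta> \<longrightarrow> wsum l \<alpha>' w \<le> 1 - \<gamma>) \<and> (\<theta> < wsum l \<alpha> w \<longrightarrow> 1 + \<gamma> / 2 \<le> wsum l \<alpha>' w)" for w
    using normalized[of w] upper[of w] relative_error_above_gap[OF \<open>\<gamma> > 0\<close> lower[of w, unfolded \<eta>_def]]
    by auto
  have "wsum l \<alpha> w \<le> \<theta> \<longleftrightarrow> wsum l \<alpha>' w \<le> 1" for w
    using separated[of w] \<open>\<gamma> > 0\<close> by (cases "wsum l \<alpha> w \<le> \<theta>") auto
  then have "LLin l \<pi> \<sigma> \<alpha> \<theta> = LLin l \<pi> \<sigma> \<alpha>' 1" by (simp add: LLin_def)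
  moreover have "wsum l \<alpha>' w < 1 - \<gamma> / 4 \<or> wsum l \<alpha>' w > 1 + \<gamma> / 4" for w
    using separated[of w] \<open>\<gamma> > 0\<close> by (cases "wsum l \<alpha> w \<le> \<theta>") auto
  moreover have "\<forall>m\<in>words_of_len l. \<alpha>' m \<ge> 0 \<and> (\<exists>n::nat. n < 2 ^ k \<and> \<alpha>' m = real k - log 2 (real n + 1))"
    using \<beta>_nonneg log_grid_round_nonneg log_grid_round_on_grid by (simp add: \<alpha>'_def)
  moreover have "\<gamma> / 4 > 0" using \<open>\<gamma> > 0\<close> by simp
  ultimately show ?thesis by blast
qed

end
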